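(* For every graph $G$ with minimum degree $\delta(G)\ge 2$, $\chi'_{m\Sigma}(G)\le 18$.
   Context: All graphs are simple and finite. A $k$-edge-coloring of $G$ is any map $c:E(G)\to\{1,\dots,k\}$ (adjacent edges may share colors). It induces $\sigma_c(v)=\sum_{u\in N(v)}c(vu)$. The coloring is neighbor sum distinguishing (NSD) if $\sigma_c(u)\ne\sigma_c(v)$ for every edge $uv$. It is majority if every vertex $v$ is incident to at most $d(v)/2$ edges of each single color. $\chi'_{m\Sigma}(G)$ denotes the least $k$ such that $G$ has a $k$-edge-coloring that is both majority and NSD. *)

theory Defs
  imports Main
begin

definition simple_graph :: "'a set \<Rightarrow> ('a \<Rightarrow> 'a \<Rightarrow> bool) \<Rightarrow> bool" where
  "simple_graph V E \<longleftrightarrow> finite V \<and> (\<forall>u v. E u v \<longrightarrow> u \<in> V \<and> v \<in> V)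
     \<and> (\<forall>u v. E u v \<longrightarrow> E v u) \<and> (\<forall>v. \<not> E v v)"

definition nbrs :: "'a set \<Rightarrow> ('a \<Rightarrow> 'a \<Rightarrow> bool) \<Rightarrow> 'a \<Rightarrow> 'a set" where
  "nbrs V E v = {u \<in> V. E v u}"

definition deg :: "'a set \<Rightarrow> ('a \<Rightarrow> 'a \<Rightarrow> bool) \<Rightarrow> 'a \<Rightarrow> nat" where
  "deg V E v = card (nbrs V E v)"

definition edges :: "'a set \<Rightarrow> ('a \<Rightarrow> 'a \<Rightarrow> bool) \<Rightarrow> 'a set set" where
  "edges V E = {{u, v} | u v. u \<in> V \<and> v \<in> V \<and> E u v}"

definition min_degree_ge :: "'a set \<Rightarrow> ('a \<Rightarrow> 'a \<Rightarrow> bool) \<Rightarrow> nat \<Rightarrow> bool" where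
  "min_degree_ge V E d \<longleftrightarrow> (\<forall>v\<in>V. d \<le> deg V E v)"

text \<open>A k-edge-colouring: a map from the edges into {1..k} (adjacent edges may share colours).\<close>
definition edge_coloring :: "'a set \<Rightarrow> ('a \<Rightarrow> 'a \<Rightarrow> bool) \<Rightarrow> nat \<Rightarrow> ('a set \<Rightarrow> nat) \<Rightarrow> bool" where
  "edge_coloring V E k c \<longleftrightarrow> (\<forall>e\<in>edges V E. c e \<in> {1..k})"

definition sigma :: "'a set \<Rightarrow> ('a \<Rightarrow> 'a \<Rightarrow> bool) \<Rightarrow> ('a set \<Rightarrow> nat) \<Rightarrow> 'a \<Rightarrow> nat" where
  "sigma V E c v = (\<Sum>u\<in>nbrs V E v. c {v, u})"

definition nsd :: "'a set \<Rightarrow> ('a \<Rightarrow> 'a \<Rightarrow> bool) \<Rightarrow> ('a set \<Rightarrow> nat) \<Rightarrow> bool" where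
  "nsd V E c \<longleftrightarrow> (\<forall>u\<in>V. \<forall>v\<in>V. E u v \<longrightarrow> sigma V E c u \<noteq> sigma V E c v)"

definition majority :: "'a set \<Rightarrow> ('a \<Rightarrow> 'a \<Rightarrow> bool) \<Rightarrow> ('a set \<Rightarrow> nat) \<Rightarrow> bool" where
  "majority V E c \<longleftrightarrow>
     (\<forall>v\<in>V. \<forall>i. 2 * card {u \<in> nbrs V E v. c {v, u} = i} \<le> deg V E v)"

definition chi_mSigma :: "'a set \<Rightarrow> ('a \<Rightarrow> 'a \<Rightarrow> bool) \<Rightarrow> nat" where
  "chi_mSigma V E = (LEAST k. \<exists>c. edge_coloring V E k c \<and> majority V E c \<and> nsd V E c)"

end

theory Submission
  imports Defs "HOL-Combinatorics.Transposition"
begin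

text \<open>The vertices are processed in an order in which every vertex either has a later neighbour,
  its parent, or is a root that comes after all vertices within distance two of it. Every edge
  gets the colour a + 6 x with a residue a \<in> {1..6} and x \<in> {0, 1, 2}. Around each vertex the
  neighbours are grouped into pairs (and one triple if the degree is odd), and edges in a common
  group get distinct residues, which makes the colouring majority. The residues of non-parent
  edges are fixed greedily at the start, each such edge being in conflict with at most four
  others, and x starts at 1.

  When v is processed, the sum at every earlier non-root neighbour j lies in a window
  {lo j, lo j + 6}; moving x on the edge vj to 0 or 2 keeps it there while shifting the sum at v
  by 6 or -6. A non-root v chooses the residue of its parent edge, avoiding at most four values,
  and a set of such moves so that its own window misses the windows of its earlier neighbours.
  A root, whose neighbourhood no later step touches, chooses the moves so that its sum differs
  from the sums at all its neighbours. Both choices are counting arguments on signed subset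
  sums.\<close>

section \<open>Counting lemmas\<close>

lemma ex_not_mem_of_card_less:
  assumes "finite A" and "card A < card B"
  shows "\<exists>x\<in>B. x \<notin> A"
proof (rule ccontr)
  assume "\<not> ?thesis"
  then have "card B \<le> card A"
    using assms(1) by (intro card_mono) auto
  then show False
    using assms(2) by simp
qed

lemma sum_card_disjoint_family_le:
  assumes "finite B" and "\<And>i. i \<in> I \<Longrightarrow> S i \<subseteq> B"
    and "\<And>i i'. i \<in> I \<Longrightarrow> i' \<in> I \<Longrightarrow> i \<noteq> i' \<Longrightarrow> S i \<inter> S i' = {}"
  shows "(\<Sum>i\<in>I. card (S i)) \<le> card B"
proof (cases "finite I")
  case True
  have "(\<Sum>i\<in>I. card (S i)) = card (\<Union>i\<in>I. S i)"
    using True assms by (intro card_UN_disjoint[symmetric]) (auto intro: finite_subset)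
  also have "\<dots> \<le> card B"
    using assms by (intro card_mono) auto
  finally show ?thesis .
qed simp

lemma sum_card_fibres_le:
  assumes "finite B"
  shows "(\<Sum>y\<in>W. card {j\<in>B. z j = y}) \<le> card B"
  using assms by (rule sum_card_disjoint_family_le) auto

lemma pigeonhole_disjoint_family:
  assumes "finite B" and "finite I" and "I \<noteq> {}" and "\<And>i. i \<in> I \<Longrightarrow> S i \<subseteq> B"
    and "\<And>i i'. i \<in> I \<Longrightarrow> i' \<in> I \<Longrightarrow> i \<noteq> i' \<Longrightarrow> S i \<inter> S i' = {}"
  shows "\<exists>i\<in>I. card I * card (S i) \<le> card B"
proof (rule ccontr)
  assume "\<not> ?thesis"
  then have "card I * (card B + 1) \<le> (\<Sum>i\<in>I. card I * card (S i))"
    using sum_bounded_below[of I "card B + 1" "\<lambda>i. card I * card (S i)"] by force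
  also have "\<dots> \<le> card I * card B"
    using sum_card_disjoint_family_le[of B I S] assms by (simp add: sum_distrib_left[symmetric])
  finally show False
    using assms(2,3) by (simp add: card_gt_0_iff)
qed

lemma ex_last_level_above_diagonal:
  fixes n :: "int \<Rightarrow> int"
  assumes "0 < n 0" and "\<And>y. n y \<le> b"
  shows "\<exists>m0\<ge>0. m0 < n m0 \<and> (\<forall>m>m0. n m \<le> m)"
proof -
  define M where "M = {m. 0 \<le> m \<and> m \<le> b \<and> m < n m}"
  have "0 \<in> M"
    using assms(1) assms(2)[of 0] unfolding M_def by simp
  moreover have "finite M"
    unfolding M_def by (rule finite_subset[of _ "{0..b}"]) auto
  ultimately have "Max M \<in> M" and le_Max: "\<And>m. m \<in> M \<Longrightarrow> m \<le> Max M"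
    using Max_in by auto
  have "n m \<le> m" if "Max M < m" for m
  proof (rule ccontr)
    assume "\<not> n m \<le> m"
    then have "m \<in> M"
      using that \<open>Max M \<in> M\<close> assms(2)[of m] unfolding M_def by auto
    then show False
      using le_Max that by fastforce
  qed
  then show ?thesis
    using \<open>Max M \<in> M\<close> unfolding M_def by blast
qed

lemma ex_level_with_room_int:
  fixes n :: "int \<Rightarrow> int"
  assumes "2 \<le> b" and nonneg: "\<And>y. 0 \<le> n y"
    and two: "\<And>y y'. y \<noteq> y' \<Longrightarrow> n y + n y' \<le> b"
    and three: "\<And>y y' y''. y \<noteq> y' \<Longrightarrow> y \<noteq> y'' \<Longrightarrow> y' \<noteq> y'' \<Longrightarrow> n y + n y' + n y'' \<le> b"
  shows "\<exists>m\<ge>0. n m \<le> m \<and> n (m - 1) + m \<le> b"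
proof (cases "n 0 = 0")
  case True
  then show ?thesis
    using two[of "-1" 0] by (intro exI[of _ 0]) simp
next
  case False
  have "n y \<le> b" for y
    using two[of y "y + 1"] nonneg[of "y + 1"] by simp
  then obtain m0 where "0 \<le> m0" "m0 < n m0" and above: "\<And>m. m0 < m \<Longrightarrow> n m \<le> m"
    using ex_last_level_above_diagonal[of n b] False nonneg[of 0] by auto
  show ?thesis
  proof (cases "m0 = 0")
    case True
    show ?thesis
    proof (cases "n 0 < b")
      case True
      then show ?thesis
        using above[of 1] \<open>m0 = 0\<close> by (intro exI[of _ 1]) simp
    next
      case False
      then have "n 1 = 0"
        using two[of 0 1] nonneg[of 1] by simp
      then show ?thesis
        using above[of 2] \<open>m0 = 0\<close> \<open>2 \<le> b\<close> by (intro exI[of _ 2]) simp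
    qed
  next
    case False
    have "m0 + 2 \<le> b"
      using two[of 0 m0] \<open>m0 < n m0\<close> \<open>n 0 \<noteq> 0\<close> nonneg[of 0] False by linarith
    moreover have "n (m0 + 1) + n 0 + n m0 \<le> b"
      using three[of "m0 + 1" 0 m0] \<open>0 \<le> m0\<close> False by simp
    ultimately show ?thesis
      using above[of "m0 + 2"] \<open>m0 < n m0\<close> \<open>n 0 \<noteq> 0\<close> nonneg[of 0] \<open>0 \<le> m0\<close>
      by (intro exI[of _ "m0 + 2"]) (simp add: add.commute)
  qed
qed

lemma ex_level_with_room:
  fixes z :: "'a \<Rightarrow> int"
  assumes "finite B" and "2 \<le> card B"
  shows "\<exists>m\<ge>0. int (card {j\<in>B. z j = m}) \<le> m \<and> int (card {j\<in>B. z j = m - 1}) + m \<le> int (card B)"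
proof -
  define n where "n y = int (card {j\<in>B. z j = y})" for y
  have fibres: "(\<Sum>y\<in>W. n y) \<le> int (card B)" for W
    using sum_card_fibres_le[OF assms(1), where W = W and z = z] unfolding n_def by (simp flip: of_nat_sum)
  have "\<exists>m\<ge>0. n m \<le> m \<and> n (m - 1) + m \<le> int (card B)"
  proof (rule ex_level_with_room_int)
    show "n y + n y' \<le> int (card B)" if "y \<noteq> y'" for y y'
      using fibres[of "{y, y'}"] that by simp
    show "n y + n y' + n y'' \<le> int (card B)" if "y \<noteq> y'" "y \<noteq> y''" "y' \<noteq> y''" for y y' y''
      using fibres[of "{y, y', y''}"] that by simp
  qed (use assms(2) n_def in auto)
  then show ?thesis
    unfolding n_def .
qed

lemma ex_subset_card_remove_avoids:
  fixes z :: "'a \<Rightarrow> int"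
  assumes "finite B" and "2 \<le> card B"
  shows "\<exists>Y\<subseteq>B. \<forall>j\<in>B. int (card (Y - {j})) \<noteq> z j"
proof -
  obtain m where "0 \<le> m" and low: "int (card {j\<in>B. z j = m}) \<le> m"
    and room: "int (card {j\<in>B. z j = m - 1}) + m \<le> int (card B)"
    using ex_level_with_room[OF assms] by blast
  define C where "C = {j\<in>B. z j \<noteq> m - 1}"
  have "C = B - {j\<in>B. z j = m - 1}" and sub: "{j\<in>B. z j = m - 1} \<subseteq> B"
    unfolding C_def by auto
  then have "card C = card B - card {j\<in>B. z j = m - 1}" "card {j\<in>B. z j = m - 1} \<le> card B"
    using card_Diff_subset[OF _ sub] card_mono[OF assms(1) sub] assms(1) by auto
  then have "nat m \<le> card C"
    using room by linarith
  moreover have "card {j\<in>B. z j = m} \<le> nat m" "{j\<in>B. z j = m} \<subseteq> C" "finite C"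
    using low assms(1) unfolding C_def by auto
  ultimately obtain Y where "{j\<in>B. z j = m} \<subseteq> Y" "Y \<subseteq> C" "card Y = nat m"
    using exists_subset_between[of "{j\<in>B. z j = m}" "nat m" C] by blast
  have "finite Y"
    using \<open>Y \<subseteq> C\<close> \<open>finite C\<close> by (rule finite_subset)
  \<comment> \<open>Removing j from Y leaves m - 1 elements if j \<in> Y and m otherwise; both values are avoided.\<close>
  have "int (card (Y - {j})) \<noteq> z j" if "j \<in> B" for j
  proof (cases "j \<in> Y")
    case True
    then have "int (card (Y - {j})) = m - 1"
      using \<open>card Y = nat m\<close> \<open>finite Y\<close> card_gt_0_iff[of Y] by (auto simp: of_nat_diff)
    then show ?thesis
      using True \<open>Y \<subseteq> C\<close> unfolding C_def by auto
  next
    case False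
    then show ?thesis
      using that \<open>card Y = nat m\<close> \<open>0 \<le> m\<close> \<open>{j\<in>B. z j = m} \<subseteq> Y\<close> by auto
  qed
  then show ?thesis
    using \<open>Y \<subseteq> C\<close> unfolding C_def by blast
qed

lemma sum_signs_symdiff:
  fixes eps :: "'a \<Rightarrow> int"
  assumes "finite B" and "Y \<subseteq> B" and "\<forall>k\<in>B. eps k = 1 \<or> eps k = -1"
    and H: "H = {k\<in>B. eps k = -1}"
  shows "(\<Sum>k\<in>(Y - H) \<union> (H - Y). eps k) = int (card Y) - int (card H)"
proof -
  have fin: "finite Y" "finite H"
    using assms(1,2) H by (auto intro: finite_subset)
  have "(\<Sum>k\<in>(Y - H) \<union> (H - Y). eps k) = (\<Sum>k\<in>Y - H. eps k) + (\<Sum>k\<in>H - Y. eps k)"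
    using fin by (intro sum.union_disjoint) auto
  also have "\<dots> = (\<Sum>k\<in>Y - H. 1) + (\<Sum>k\<in>H - Y. -1)"
    using assms by (intro arg_cong2[where f = "(+)"] sum.cong) auto
  also have "\<dots> = int (card (Y - H)) - int (card (H - Y))"
    by simp
  also have "\<dots> = int (card Y) - int (card H)"
    using fin card_mono[of Y "H \<inter> Y"] card_mono[of H "H \<inter> Y"]
    by (simp add: card_Diff_subset_Int Int_commute of_nat_diff)
  finally show ?thesis .
qed

lemma ex_subset_signed_sum_remove_avoids:
  fixes eps w :: "'a \<Rightarrow> int"
  assumes "finite B" and "2 \<le> card B" and signs: "\<forall>k\<in>B. eps k = 1 \<or> eps k = -1"
  shows "\<exists>Y\<subseteq>B. \<forall>j\<in>B. (\<Sum>k\<in>Y - {j}. eps k) \<noteq> w j"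
proof -
  define H where "H = {k\<in>B. eps k = -1}"
  obtain Y' where "Y' \<subseteq> B" and Y': "\<forall>j\<in>B. int (card (Y' - {j})) \<noteq> w j + int (card (H - {j}))"
    using ex_subset_card_remove_avoids[OF assms(1,2), where z = "\<lambda>j. w j + int (card (H - {j}))"]
    by blast
  define Y where "Y = (Y' - H) \<union> (H - Y')"
  have "(\<Sum>k\<in>Y - {j}. eps k) = int (card (Y' - {j})) - int (card (H - {j}))" for j
  proof -
    have "Y - {j} = ((Y' - {j}) - (H - {j})) \<union> ((H - {j}) - (Y' - {j}))"
      unfolding Y_def by auto
    then have "(\<Sum>k\<in>Y - {j}. eps k) = (\<Sum>k\<in>((Y' - {j}) - (H - {j})) \<union> ((H - {j}) - (Y' - {j})). eps k)"
      by (rule arg_cong)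
    also have "\<dots> = int (card (Y' - {j})) - int (card (H - {j}))"
      using assms(1) signs \<open>Y' \<subseteq> B\<close> unfolding H_def
      by (intro sum_signs_symdiff[of "B - {j}"]) auto
    finally show ?thesis .
  qed
  then have "\<forall>j\<in>B. (\<Sum>k\<in>Y - {j}. eps k) \<noteq> w j"
    using Y' by auto
  moreover have "Y \<subseteq> B"
    using \<open>Y' \<subseteq> B\<close> unfolding Y_def H_def by auto
  ultimately show ?thesis by blast
qed

lemma ex_subset_signed_sum_eq:
  fixes eps :: "'a \<Rightarrow> int"
  assumes "finite B" and "\<forall>k\<in>B. eps k = 1 \<or> eps k = -1"
    and "- int (card {k\<in>B. eps k = -1}) \<le> T" and "T \<le> int (card {k\<in>B. eps k = 1})"
  shows "\<exists>Y\<subseteq>B. (\<Sum>k\<in>Y. eps k) = T"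
proof (cases "0 \<le> T")
  case True
  obtain Y where Y: "Y \<subseteq> {k\<in>B. eps k = 1}" "card Y = nat T"
    using obtain_subset_with_card_n[of "nat T" "{k\<in>B. eps k = 1}"] assms(4) True by force
  have "(\<Sum>k\<in>Y. eps k) = (\<Sum>k\<in>Y. 1)"
    using Y(1) by (intro sum.cong) auto
  then show ?thesis
    using Y True by (intro exI[of _ Y]) auto
next
  case False
  obtain Y where Y: "Y \<subseteq> {k\<in>B. eps k = -1}" "card Y = nat (- T)"
    using obtain_subset_with_card_n[of "nat (- T)" "{k\<in>B. eps k = -1}"] assms(3) False by force
  have "(\<Sum>k\<in>Y. eps k) = (\<Sum>k\<in>Y. -1)"
    using Y(1) by (intro sum.cong) auto
  then show ?thesis
    using Y False by (intro exI[of _ Y]) auto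
qed

definition window :: "int \<Rightarrow> int set" where
  "window l = {l, l + 6}"

lemma window_flip:
  assumes "\<sigma> \<in> window l"
  shows "\<sigma> + 6 * (if \<sigma> = l then 1 else -1) \<in> window l"
  using assms unfolding window_def by auto

lemma window_disjoint_iff: "window l \<inter> window l' = {} \<longleftrightarrow> l - l' \<notin> {-6, 0, 6}"
  unfolding window_def by auto

lemma ex_window_avoiding:
  fixes lo :: "'a \<Rightarrow> int"
  assumes "finite B" and rare: "3 * card {j\<in>B. 6 dvd (lo j - s)} \<le> card B + 1"
  shows "\<exists>t. m \<le> t \<and> t \<le> m + int (card B) + 1 \<and> (\<forall>j\<in>B. window (s + 6 * t) \<inter> window (lo j) = {})"
proof -
  define Bs where "Bs = {j\<in>B. 6 dvd (lo j - s)}"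
  define Bad where "Bad = (\<lambda>(j, e). (lo j - s) div 6 + e) ` (Bs \<times> {-1, 0, 1})"
  have "card Bad \<le> card (Bs \<times> {-1, 0, 1::int})"
    unfolding Bad_def using assms(1) by (intro card_image_le) (simp add: Bs_def)
  also have "\<dots> < card {m..m + int (card B) + 1}"
    using rare unfolding Bs_def by (simp add: card_cartesian_product)
  finally have "card Bad < card {m..m + int (card B) + 1}" .
  moreover have "finite Bad"
    using assms(1) unfolding Bad_def Bs_def by simp
  ultimately obtain t where t: "t \<in> {m..m + int (card B) + 1}" "t \<notin> Bad"
    using ex_not_mem_of_card_less by blast
  have "window (s + 6 * t) \<inter> window (lo j) = {}" if "j \<in> B" for j
  proof (cases "j \<in> Bs")
    case True
    then obtain q where q: "lo j - s = 6 * q"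
      unfolding Bs_def by (auto elim: dvdE)
    have "q + e \<in> Bad" if "e \<in> {-1, 0, 1}" for e
      unfolding Bad_def using True that q by (intro image_eqI[of _ _ "(j, e)"]) auto
    from this[of "-1"] this[of 0] this[of 1] have "t \<notin> {q - 1, q, q + 1}"
      using t(2) by auto
    then show ?thesis
      unfolding window_disjoint_iff using q by auto
  next
    case False
    then have "lo j - s \<noteq> 6 * (t - c)" for c
      using that unfolding Bs_def by auto
    from this[of "-1"] this[of 0] this[of 1] show ?thesis
      unfolding window_disjoint_iff by (auto simp: algebra_simps)
  qed
  then show ?thesis
    using t(1) by auto
qed

lemma residue_unique:
  fixes \<alpha> \<alpha>' :: nat
  assumes "\<alpha> \<in> {1..6}" and "\<alpha>' \<in> {1..6}" and "6 dvd (z - int \<alpha>)" and "6 dvd (z - int \<alpha>')"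
  shows "\<alpha> = \<alpha>'"
proof (rule ccontr)
  assume "\<alpha> \<noteq> \<alpha>'"
  have "6 dvd ((z - int \<alpha>) - (z - int \<alpha>'))"
    using assms(3,4) by (rule dvd_diff)
  moreover have "\<bar>int \<alpha>' - int \<alpha>\<bar> < 6"
    using assms(1,2) by auto
  ultimately show False
    using \<open>\<alpha> \<noteq> \<alpha>'\<close> dvd_imp_le_int[of "int \<alpha>' - int \<alpha>" 6] by simp
qed

lemma ex_colour_rarely_congruent:
  fixes F :: "nat set" and lo :: "'a \<Rightarrow> int"
  assumes "finite B" and "finite F" and few: "card F \<le> 3 \<or> card F \<le> 4 \<and> card B \<le> 2"
  shows "\<exists>\<alpha>\<in>{1..6} - F. 3 * card {j\<in>B. 6 dvd (lo j - s - int \<alpha>)} \<le> card B + 1"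
proof -
  define A where "A = {1..6::nat} - F"
  define S where "S \<alpha> = {j\<in>B. 6 dvd (lo j - s - int \<alpha>)}" for \<alpha>
  have "6 - card F \<le> card A"
    unfolding A_def using diff_card_le_card_Diff[OF assms(2), of "{1..6}"] by simp
  have disjoint: "S \<alpha> \<inter> S \<alpha>' = {}" if "\<alpha> \<in> A" "\<alpha>' \<in> A" "\<alpha> \<noteq> \<alpha>'" for \<alpha> \<alpha>'
    using that residue_unique[of \<alpha> \<alpha>'] unfolding S_def A_def by auto
  have "2 \<le> card A"
    using \<open>6 - card F \<le> card A\<close> few by linarith
  then have "A \<noteq> {}"
    by (intro notI) simp
  have "finite A"
    unfolding A_def by simp
  then obtain \<alpha> where "\<alpha> \<in> A" and small: "card A * card (S \<alpha>) \<le> card B"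
    using pigeonhole_disjoint_family[OF assms(1) \<open>finite A\<close> \<open>A \<noteq> {}\<close>, of S] disjoint unfolding S_def
    by auto
  have "3 * card (S \<alpha>) \<le> card B + 1"
  proof (cases "3 \<le> card A")
    case True
    then show ?thesis
      using small mult_le_mono1[OF True, of "card (S \<alpha>)"] by linarith
  next
    case False
    then have "card B \<le> 2"
      using few \<open>6 - card F \<le> card A\<close> by linarith
    then have "2 * card (S \<alpha>) \<le> card B"
      using small mult_le_mono1[OF \<open>2 \<le> card A\<close>, of "card (S \<alpha>)"] by linarith
    then show ?thesis
      using \<open>card B \<le> 2\<close> by linarith
  qed
  then show ?thesis
    using \<open>\<alpha> \<in> A\<close> unfolding A_def S_def by blast
qed

lemma card_signs:
  fixes eps :: "'a \<Rightarrow> int"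
  assumes "finite B" and "\<forall>k\<in>B. eps k = 1 \<or> eps k = -1"
  shows "card {k\<in>B. eps k = -1} + card {k\<in>B. eps k = 1} = card B"
proof -
  have "card B = card ({k\<in>B. eps k = -1} \<union> {k\<in>B. eps k = 1})"
    using assms(2) by (intro arg_cong[where f = card]) auto
  also have "\<dots> = card {k\<in>B. eps k = -1} + card {k\<in>B. eps k = 1}"
    using assms(1) by (intro card_Un_disjoint) auto
  finally show ?thesis ..
qed

lemma ex_colour_and_window:
  fixes eps lo :: "'a \<Rightarrow> int" and F :: "nat set"
  assumes "finite B" and signs: "\<forall>k\<in>B. eps k = 1 \<or> eps k = -1" and "finite F"
    and "card F \<le> 3 \<or> card F \<le> 4 \<and> card B \<le> 2"
  shows "\<exists>\<alpha>\<in>{1..6} - F. \<exists>Y\<subseteq>B. \<exists>L. s + int \<alpha> + 6 * (\<Sum>k\<in>Y. eps k) \<in> window L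
           \<and> (\<forall>j\<in>B. window L \<inter> window (lo j) = {})"
proof -
  obtain \<alpha> where \<alpha>: "\<alpha> \<in> {1..6} - F"
    and rare: "3 * card {j\<in>B. 6 dvd (lo j - s - int \<alpha>)} \<le> card B + 1"
    using ex_colour_rarely_congruent[OF assms(1,3,4)] by blast
  define n_neg where "n_neg = int (card {k\<in>B. eps k = -1})"
  define n_pos where "n_pos = int (card {k\<in>B. eps k = 1})"
  have "n_neg + n_pos = int (card B)"
    using card_signs[OF assms(1) signs] unfolding n_neg_def n_pos_def by (simp flip: of_nat_add)
  have "3 * card {j\<in>B. 6 dvd (lo j - (s + int \<alpha>))} \<le> card B + 1"
    using rare by (simp add: diff_diff_eq)
  then obtain t where t: "- n_neg - 1 \<le> t" "t \<le> - n_neg - 1 + int (card B) + 1"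
    and apart: "\<forall>j\<in>B. window (s + int \<alpha> + 6 * t) \<inter> window (lo j) = {}"
    using ex_window_avoiding[OF assms(1)] by blast
  \<comment> \<open>The window may start at the signed sum or 6 below it, whence card B + 2 candidates for t.\<close>
  have "- n_neg \<le> max t (- n_neg)" "max t (- n_neg) \<le> n_pos"
    using t \<open>n_neg + n_pos = int (card B)\<close> by auto
  then obtain Y where "Y \<subseteq> B" and Y: "(\<Sum>k\<in>Y. eps k) = max t (- n_neg)"
    using ex_subset_signed_sum_eq[OF assms(1) signs] unfolding n_neg_def n_pos_def by blast
  have "s + int \<alpha> + 6 * (\<Sum>k\<in>Y. eps k) \<in> window (s + int \<alpha> + 6 * t)"
    using Y t unfolding window_def by auto
  then show ?thesis
    using \<alpha> \<open>Y \<subseteq> B\<close> apart by blast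
qed

lemma greedy_colouring:
  assumes "finite X" and sparse: "\<And>e. e \<in> X \<Longrightarrow> card {e'\<in>X. R e e'} < n"
    and sym: "\<And>e e'. R e e' \<Longrightarrow> R e' e" and irrefl: "\<And>e. \<not> R e e"
  shows "\<exists>f. \<forall>e\<in>X. f e \<in> {1..n} \<and> (\<forall>e'\<in>X. R e e' \<longrightarrow> f e \<noteq> f e')"
proof -
  have "\<exists>f. \<forall>e\<in>Z. f e \<in> {1..n} \<and> (\<forall>e'\<in>Z. R e e' \<longrightarrow> f e \<noteq> f e')" if "Z \<subseteq> X" for Z
    using finite_subset[OF that assms(1)] that
  proof (induction Z rule: finite_induct)
    case empty
    show ?case by simp
  next
    case (insert e Z)
    then obtain f where f: "\<forall>e\<in>Z. f e \<in> {1..n} \<and> (\<forall>e'\<in>Z. R e e' \<longrightarrow> f e \<noteq> f e')"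
      by blast
    have "card (f ` {e'\<in>Z. R e e'}) \<le> card {e'\<in>X. R e e'}"
      using insert assms(1) by (intro card_image_le[THEN le_trans] card_mono) auto
    also have "\<dots> < card {1..n}"
      using sparse insert.prems by simp
    finally have "card (f ` {e'\<in>Z. R e e'}) < card {1..n}" .
    moreover have "finite (f ` {e'\<in>Z. R e e'})"
      using insert.hyps(1) by simp
    ultimately obtain col where col: "col \<in> {1..n}" "col \<notin> f ` {e'\<in>Z. R e e'}"
      using ex_not_mem_of_card_less by blast
    have "f e' \<noteq> col" if "e' \<in> Z" "R e e' \<or> R e' e" for e'
      using col(2) that sym by blast
    then have "\<forall>e''\<in>insert e Z. (f(e := col)) e'' \<in> {1..n}
        \<and> (\<forall>e'\<in>insert e Z. R e'' e' \<longrightarrow> (f(e := col)) e'' \<noteq> (f(e := col)) e')"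
      using f col(1) insert.hyps(2) irrefl by auto
    then show ?case by blast
  qed
  then show ?thesis by blast
qed

lemma ex_bij_betw_nat_zero:
  assumes "finite M" and "x \<in> M"
  shows "\<exists>f. bij_betw f M {0..<card M} \<and> f x = 0"
proof -
  obtain g where g: "bij_betw g M {0..<card M}"
    using ex_bij_betw_finite_nat[OF assms(1)] by blast
  have "g x \<in> {0..<card M}" "0 \<in> {0..<card M}"
    using bij_betwE[OF g] assms by auto
  then have "bij_betw (transpose (g x) 0 \<circ> g) M {0..<card M}"
    by (intro bij_betw_trans[OF g]) simp
  then show ?thesis
    by (intro exI[of _ "transpose (g x) 0 \<circ> g"]) simp
qed

section \<open>Search orders\<close>

text \<open>Read from right to left, a search order is a graph search: every vertex is adjacent to a vertex
  listed before it, unless the vertices listed before it form a union of components.\<close>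

definition search_order :: "'a set \<Rightarrow> ('a \<Rightarrow> 'a \<Rightarrow> bool) \<Rightarrow> 'a list \<Rightarrow> bool" where
  "search_order V E xs \<longleftrightarrow> (\<forall>i<length xs. (\<exists>l. i < l \<and> l < length xs \<and> E (xs ! i) (xs ! l))
     \<or> (\<forall>y\<in>V - set (drop (Suc i) xs). \<forall>z\<in>set (drop (Suc i) xs). \<not> E y z))"

lemma search_order_Cons:
  assumes "search_order V E xs" and "(\<exists>y\<in>set xs. E x y) \<or> (\<forall>y\<in>V - set xs. \<forall>z\<in>set xs. \<not> E y z)"
  shows "search_order V E (x # xs)"
  unfolding search_order_def
proof (intro allI impI)
  fix i
  assume "i < length (x # xs)"
  then show "(\<exists>l. i < l \<and> l < length (x # xs) \<and> E ((x # xs) ! i) ((x # xs) ! l))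
      \<or> (\<forall>y\<in>V - set (drop (Suc i) (x # xs)). \<forall>z\<in>set (drop (Suc i) (x # xs)). \<not> E y z)"
  proof (cases i)
    case 0
    have "\<exists>l. 0 < l \<and> l < length (x # xs) \<and> E x ((x # xs) ! l)" if "y \<in> set xs" "E x y" for y
    proof -
      obtain l where "l < length xs" "xs ! l = y"
        using \<open>y \<in> set xs\<close> by (auto simp: in_set_conv_nth)
      then show ?thesis
        using \<open>E x y\<close> by (intro exI[of _ "Suc l"]) simp
    qed
    then show ?thesis
      using assms(2) 0 by auto
  next
    case (Suc i')
    then have "i' < length xs"
      using \<open>i < length (x # xs)\<close> by simp
    then have "(\<exists>l. i' < l \<and> l < length xs \<and> E (xs ! i') (xs ! l))
        \<or> (\<forall>y\<in>V - set (drop (Suc i') xs). \<forall>z\<in>set (drop (Suc i') xs). \<not> E y z)"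
      using assms(1) unfolding search_order_def by blast
    then show ?thesis
    proof
      assume "\<exists>l. i' < l \<and> l < length xs \<and> E (xs ! i') (xs ! l)"
      then obtain l where "i' < l" "l < length xs" "E (xs ! i') (xs ! l)"
        by blast
      then show ?thesis
        using Suc by (intro disjI1 exI[of _ "Suc l"]) simp
    qed (use Suc in simp)
  qed
qed

lemma ex_search_order:
  assumes "finite V"
  shows "\<exists>xs. distinct xs \<and> set xs = V \<and> search_order V E xs"
proof -
  have "\<exists>xs. length xs = k \<and> distinct xs \<and> set xs \<subseteq> V \<and> search_order V E xs" if "k \<le> card V" for k
    using that
  proof (induction k)
    case 0
    show ?case by (auto simp: search_order_def)
  next
    case (Suc k)
    then obtain xs where xs: "length xs = k" "distinct xs" "set xs \<subseteq> V" "search_order V E xs"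
      by auto
    have "\<not> V \<subseteq> set xs"
      using card_mono[of "set xs" V] xs Suc.prems by (auto simp: distinct_card)
    then obtain x where "x \<in> V - set xs"
      and linked: "(\<exists>y\<in>set xs. E x y) \<or> (\<forall>y\<in>V - set xs. \<forall>z\<in>set xs. \<not> E y z)"
      by blast
    then show ?case
      using xs search_order_Cons[OF xs(4) linked] by (intro exI[of _ "x # xs"]) auto
  qed
  from this[of "card V"] obtain xs
    where "length xs = card V" "distinct xs" "set xs \<subseteq> V" "search_order V E xs"
    by blast
  moreover from this have "set xs = V"
    using assms by (intro card_subset_eq) (auto simp: distinct_card)
  ultimately show ?thesis
    by blast
qed

lemma nth_mem_set_drop_iff:
  assumes "distinct xs" and "i < length xs"
  shows "xs ! i \<in> set (drop m xs) \<longleftrightarrow> m \<le> i"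
proof
  assume "xs ! i \<in> set (drop m xs)"
  then obtain l where "l < length (drop m xs)" "drop m xs ! l = xs ! i"
    by (auto simp: in_set_conv_nth)
  then have "m + l = i"
    using assms nth_eq_iff_index_eq by fastforce
  then show "m \<le> i"
    by simp
next
  assume "m \<le> i"
  then have "drop m xs ! (i - m) = xs ! i" "i - m < length (drop m xs)"
    using assms(2) by auto
  then show "xs ! i \<in> set (drop m xs)"
    by (metis nth_mem)
qed

lemma ex_index_of_distinct:
  assumes "distinct xs"
  shows "\<exists>ord. bij_betw ord (set xs) {0..<length xs} \<and> (\<forall>v\<in>set xs. xs ! ord v = v)"
proof -
  have nth: "bij_betw ((!) xs) {0..<length xs} (set xs)"
    using bij_betw_nth[OF assms] by (simp add: atLeast0LessThan)
  show ?thesis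
    using bij_betw_inv_into[OF nth] bij_betw_inv_into_right[OF nth]
    by (intro exI[of _ "inv_into {0..<length xs} ((!) xs)"]) auto
qed

lemma search_order_later_nbr_or_last:
  assumes "search_order V E xs" and "distinct xs" and "i < length xs"
  shows "(\<exists>u\<in>set (drop (Suc i) xs). E (xs ! i) u)
    \<or> (\<forall>j\<in>V. E (xs ! i) j \<longrightarrow> (\<forall>u\<in>V. E j u \<longrightarrow> u \<notin> set (drop (Suc i) xs)))"
proof -
  define D where "D = set (drop (Suc i) xs)"
  have "(\<exists>l. i < l \<and> l < length xs \<and> E (xs ! i) (xs ! l)) \<or> (\<forall>y\<in>V - D. \<forall>z\<in>D. \<not> E y z)"
    using assms(1,3) unfolding search_order_def D_def by blast
  then show ?thesis
  proof
    assume "\<exists>l. i < l \<and> l < length xs \<and> E (xs ! i) (xs ! l)"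
    then show ?thesis
      using nth_mem_set_drop_iff[OF assms(2)] by (metis Suc_le_eq)
  next
    assume closed: "\<forall>y\<in>V - D. \<forall>z\<in>D. \<not> E y z"
    have "u \<notin> D" if "\<not> (\<exists>u\<in>D. E (xs ! i) u)" "j \<in> V" "E (xs ! i) j" "u \<in> V" "E j u" for j u
      using closed that by blast
    then show ?thesis
      unfolding D_def by blast
  qed
qed

lemma ex_order_later_nbr_or_last:
  assumes "finite V"
  shows "\<exists>ord. bij_betw ord V {0..<card V} \<and> (\<forall>v\<in>V. (\<exists>u\<in>V. E v u \<and> ord v < ord u)
           \<or> (\<forall>j\<in>V. E v j \<longrightarrow> (\<forall>u\<in>V. E j u \<longrightarrow> ord u \<le> ord v)))"
proof -
  obtain xs where xs: "distinct xs" "set xs = V" "search_order V E xs"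
    using ex_search_order[OF assms] by blast
  have "length xs = card V"
    using xs distinct_card by fastforce
  then obtain ord where ord: "bij_betw ord V {0..<card V}"
    and nth_ord: "\<And>v. v \<in> V \<Longrightarrow> xs ! ord v = v"
    using ex_index_of_distinct[OF xs(1)] xs(2) by auto
  have ord_less: "ord v < length xs" if "v \<in> V" for v
    using bij_betwE[OF ord] that \<open>length xs = card V\<close> by auto
  have later: "u \<in> set (drop (Suc (ord v)) xs) \<longleftrightarrow> ord v < ord u" if "u \<in> V" for u v
    using nth_mem_set_drop_iff[OF xs(1) ord_less[OF that], of "Suc (ord v)"] nth_ord[OF that]
    by (simp add: Suc_le_eq)
  have "(\<exists>u\<in>V. E v u \<and> ord v < ord u) \<or> (\<forall>j\<in>V. E v j \<longrightarrow> (\<forall>u\<in>V. E j u \<longrightarrow> ord u \<le> ord v))"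
    if "v \<in> V" for v
    using search_order_later_nbr_or_last[OF xs(3,1) ord_less[OF that]] later nth_ord[OF that] xs(2)
    by (metis in_set_dropD not_le)
  then show ?thesis
    using ord by blast
qed

lemma slot_bounds_of_group:
  fixes i n :: nat
  assumes "i < n" and "2 \<le> n"
  shows "2 * min (i div 2) (n div 2 - 1) \<le> i" and "i \<le> 2 * min (i div 2) (n div 2 - 1) + 2"
  using assms by (auto simp: min_def)

lemma slot_of_first_group:
  fixes i n :: nat
  assumes "i < n" and "n \<noteq> 3" and "min (i div 2) (n div 2 - 1) = 0"
  shows "i \<le> 1"
  using assms by (auto simp: min_def split: if_splits)

section \<open>Colourings of an ordered graph\<close>

definition colour :: "('a set \<Rightarrow> nat) \<Rightarrow> ('a set \<Rightarrow> nat) \<Rightarrow> 'a set \<Rightarrow> nat" where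
  "colour a x e = a e + 6 * x e"

lemma colour_neq:
  assumes "a e \<in> {1..6}" and "a e' \<in> {1..6}" and "a e \<noteq> a e'"
  shows "colour a x e \<noteq> colour a x e'"
proof
  assume "colour a x e = colour a x e'"
  then have "a e mod 6 = a e' mod 6"
    unfolding colour_def by (metis mod_mult_self2)
  moreover have "a e \<in> {1, 2, 3, 4, 5, 6}" "a e' \<in> {1, 2, 3, 4, 5, 6}"
    using assms(1,2) by auto
  ultimately show False
    using assms(3) by auto
qed

locale ordered_graph =
  fixes V :: "'a set" and E :: "'a \<Rightarrow> 'a \<Rightarrow> bool" and ord :: "'a \<Rightarrow> nat"
  assumes simple: "simple_graph V E"
    and min_deg: "min_degree_ge V E 2"
    and ord_bij: "bij_betw ord V {0..<card V}"
    and later_nbr_or_last: "\<forall>v\<in>V. (\<exists>u\<in>V. E v u \<and> ord v < ord u)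
          \<or> (\<forall>j\<in>V. E v j \<longrightarrow> (\<forall>u\<in>V. E j u \<longrightarrow> ord u \<le> ord v))"
begin

abbreviation N :: "'a \<Rightarrow> 'a set" where
  "N \<equiv> nbrs V E"

abbreviation d :: "'a \<Rightarrow> nat" where
  "d \<equiv> deg V E"

lemma finite_V: "finite V"
  using simple unfolding simple_graph_def by simp

lemma mem_nbrs_iff: "u \<in> N v \<longleftrightarrow> E v u"
  using simple unfolding simple_graph_def nbrs_def by auto

lemma nbrs_subset: "N v \<subseteq> V"
  unfolding nbrs_def by auto

lemma finite_nbrs: "finite (N v)"
  by (rule finite_subset[OF nbrs_subset finite_V])

lemma nbr_sym: "u \<in> N v \<Longrightarrow> v \<in> N u"
  using simple unfolding simple_graph_def mem_nbrs_iff by blast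

lemma nbr_neq: "u \<in> N v \<Longrightarrow> u \<noteq> v"
  using simple unfolding simple_graph_def mem_nbrs_iff by blast

lemma nbr_in_V: "u \<in> N v \<Longrightarrow> u \<in> V" and nbr_centre_in_V: "u \<in> N v \<Longrightarrow> v \<in> V"
  using nbrs_subset nbr_sym by blast+

lemma deg_eq_card: "d v = card (N v)"
  unfolding deg_def ..

lemma two_le_deg: "v \<in> V \<Longrightarrow> 2 \<le> d v"
  using min_deg unfolding min_degree_ge_def by blast

lemma ord_less_card: "v \<in> V \<Longrightarrow> ord v < card V"
  using bij_betwE[OF ord_bij] by auto

lemma ord_eq_iff: "u \<in> V \<Longrightarrow> v \<in> V \<Longrightarrow> ord u = ord v \<longleftrightarrow> u = v"
  using bij_betw_imp_inj_on[OF ord_bij] by (auto dest: inj_onD)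

definition is_root :: "'a \<Rightarrow> bool" where
  "is_root v \<longleftrightarrow> (\<forall>u\<in>N v. ord u \<le> ord v)"

definition parent :: "'a \<Rightarrow> 'a" where
  "parent v = (SOME u. u \<in> N v \<and> ord v < ord u)"

lemma parent: assumes "\<not> is_root v" shows "parent v \<in> N v" and "ord v < ord (parent v)"
proof -
  have "\<exists>u. u \<in> N v \<and> ord v < ord u"
    using assms unfolding is_root_def by auto
  from someI_ex[OF this] show "parent v \<in> N v" "ord v < ord (parent v)"
    unfolding parent_def by auto
qed

lemma root_nbr_less: assumes "is_root v" and "u \<in> N v" shows "ord u < ord v"
proof -
  have "ord u \<noteq> ord v"
    using nbr_in_V[OF assms(2)] nbr_centre_in_V[OF assms(2)] nbr_neq[OF assms(2)] ord_eq_iff by simp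
  then show ?thesis
    using assms unfolding is_root_def by fastforce
qed

lemma root_dist2_le: assumes "is_root v" and "j \<in> N v" and "u \<in> N j" shows "ord u \<le> ord v"
proof -
  have "v \<in> V" "j \<in> V" "u \<in> V"
    using nbr_centre_in_V[OF assms(2)] nbr_in_V[OF assms(2)] nbr_in_V[OF assms(3)] .
  have "E v j" "E j u"
    using assms(2,3) unfolding mem_nbrs_iff .
  have "\<not> (ord v < ord w)" if "E v w" for w
  proof -
    have "w \<in> N v"
      using that mem_nbrs_iff by simp
    then show ?thesis
      using assms(1) unfolding is_root_def by auto
  qed
  then have "\<forall>j\<in>V. E v j \<longrightarrow> (\<forall>u\<in>V. E j u \<longrightarrow> ord u \<le> ord v)"
    using later_nbr_or_last \<open>v \<in> V\<close> by blast
  then show ?thesis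
    using \<open>j \<in> V\<close> \<open>u \<in> V\<close> \<open>E v j\<close> \<open>E j u\<close> by blast
qed

lemma ex_slots: "\<exists>slot. \<forall>v\<in>V. bij_betw (slot v) (N v) {0..<d v} \<and> (\<not> is_root v \<longrightarrow> slot v (parent v) = 0)"
proof -
  have "\<forall>v. \<exists>f. bij_betw f (N v) {0..<d v} \<and> (\<not> is_root v \<longrightarrow> f (parent v) = 0)"
  proof
    fix v
    show "\<exists>f. bij_betw f (N v) {0..<d v} \<and> (\<not> is_root v \<longrightarrow> f (parent v) = 0)"
    proof (cases "is_root v")
      case True
      then show ?thesis
        using ex_bij_betw_finite_nat[OF finite_nbrs] by (simp add: deg_eq_card)
    next
      case False
      then show ?thesis
        using ex_bij_betw_nat_zero[OF finite_nbrs parent(1)] by (simp add: deg_eq_card)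
    qed
  qed
  then have "\<exists>slot. \<forall>v. bij_betw (slot v) (N v) {0..<d v} \<and> (\<not> is_root v \<longrightarrow> slot v (parent v) = 0)"
    by (rule choice)
  then show ?thesis
    by blast
qed

definition slot :: "'a \<Rightarrow> 'a \<Rightarrow> nat" where
  "slot = (SOME slot. \<forall>v\<in>V. bij_betw (slot v) (N v) {0..<d v} \<and> (\<not> is_root v \<longrightarrow> slot v (parent v) = 0))"

lemma slot_bij: "v \<in> V \<Longrightarrow> bij_betw (slot v) (N v) {0..<d v}"
  and slot_parent: "v \<in> V \<Longrightarrow> \<not> is_root v \<Longrightarrow> slot v (parent v) = 0"
  using someI_ex[OF ex_slots] unfolding slot_def by blast+

text \<open>The groups at v cut its slots into consecutive pairs, the last group absorbing the leftover
  slot when d v is odd. Giving the edges of each group distinct colours makes a colouring majority.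
  The parent edge sits in slot 0, so its group is a pair unless d v = 3.\<close>

definition group :: "'a \<Rightarrow> 'a \<Rightarrow> nat" where
  "group v u = min (slot v u div 2) (d v div 2 - 1)"

definition partners :: "'a \<Rightarrow> 'a \<Rightarrow> 'a set" where
  "partners v u = {u'\<in>N v. u' \<noteq> u \<and> group v u' = group v u}"

lemma group_less: "v \<in> V \<Longrightarrow> group v u < d v div 2"
  using two_le_deg[of v] unfolding group_def by auto

lemma partners_sym: "u' \<in> partners v u \<Longrightarrow> u \<in> N v \<Longrightarrow> u \<in> partners v u'"
  unfolding partners_def by auto

lemma finite_partners: "finite (partners v u)"
  unfolding partners_def using finite_nbrs by simp

lemma card_le_of_slots:
  assumes "v \<in> V" and "S \<subseteq> N v" and "slot v ` S \<subseteq> T" and "finite T"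
  shows "card S \<le> card T"
  using card_inj_on_le[OF inj_on_subset[OF bij_betw_imp_inj_on[OF slot_bij[OF assms(1)]] assms(2)] assms(3,4)] .

lemma card_insert_partners_le:
  assumes "v \<in> V" and "u \<in> N v"
  shows "card (insert u (partners v u)) \<le> 3"
proof -
  define g where "g = group v u"
  have "slot v u' \<in> {2 * g..2 * g + 2}" if "u' \<in> insert u (partners v u)" for u'
  proof -
    have "u' \<in> N v" "group v u' = g"
      using that assms(2) unfolding partners_def g_def by auto
    then show ?thesis
      using slot_bounds_of_group[of "slot v u'" "d v"] bij_betwE[OF slot_bij[OF assms(1)]] two_le_deg[OF assms(1)]
      unfolding group_def by auto
  qed
  then have "card (insert u (partners v u)) \<le> card {2 * g..2 * g + 2}"
    using assms by (intro card_le_of_slots) (auto simp: partners_def)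
  then show ?thesis
    by simp
qed

lemma card_partners_le: "v \<in> V \<Longrightarrow> u \<in> N v \<Longrightarrow> card (partners v u) \<le> 2"
  using card_insert_partners_le finite_partners by (simp add: partners_def)

lemma card_partners_parent_le:
  assumes "v \<in> V" and "\<not> is_root v" and "d v \<noteq> 3"
  shows "card (partners v (parent v)) \<le> 1"
proof -
  have "slot v u \<in> {0..1}" if "u \<in> insert (parent v) (partners v (parent v))" for u
  proof -
    have "u \<in> N v" "group v u = 0"
      using that parent(1)[OF assms(2)] slot_parent[OF assms(1,2)] unfolding partners_def group_def
      by auto
    then show ?thesis
      using slot_of_first_group[of "slot v u" "d v"] bij_betwE[OF slot_bij[OF assms(1)]] assms(3)
      unfolding group_def by auto
  qed
  then have "card (insert (parent v) (partners v (parent v))) \<le> card {0..1::nat}"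
    using assms parent(1)[OF assms(2)] by (intro card_le_of_slots) (auto simp: partners_def)
  then show ?thesis
    using finite_partners by (simp add: partners_def)
qed

lemma majority_if_partners_distinct:
  assumes "\<forall>v\<in>V. \<forall>u\<in>N v. \<forall>u'\<in>partners v u. c {v, u} \<noteq> c {v, u'}"
  shows "majority V E c"
  unfolding majority_def
proof (intro ballI allI)
  fix v i
  assume "v \<in> V"
  define C where "C = {u\<in>N v. c {v, u} = i}"
  have "inj_on (group v) C"
    using assms \<open>v \<in> V\<close> unfolding C_def partners_def by (intro inj_onI) blast
  moreover have "group v ` C \<subseteq> {..<d v div 2}"
    using group_less[OF \<open>v \<in> V\<close>] by auto
  ultimately have "card C \<le> d v div 2"
    using card_inj_on_le[of "group v" C "{..<d v div 2}"] by simp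
  then show "2 * card {u\<in>N v. c {v, u} = i} \<le> d v"
    unfolding C_def by simp
qed

section \<open>The invariant\<close>

definition sigma_int :: "('a set \<Rightarrow> nat) \<Rightarrow> 'a \<Rightarrow> int" where
  "sigma_int c w = (\<Sum>u\<in>N w. int (c {w, u}))"

lemma int_sigma: "int (sigma V E c w) = sigma_int c w"
  unfolding sigma_def sigma_int_def by simp

definition parent_edge :: "'a set \<Rightarrow> bool" where
  "parent_edge e \<longleftrightarrow> (\<exists>w\<in>V. \<not> is_root w \<and> e = {w, parent w})"

text \<open>The residue of a parent edge is fixed only when its lower end is processed; all other residues
  are fixed at the start.\<close>

definition settled :: "nat \<Rightarrow> 'a set \<Rightarrow> bool" where
  "settled k e \<longleftrightarrow> \<not> parent_edge e \<or> (\<exists>w\<in>V. \<not> is_root w \<and> ord w < k \<and> e = {w, parent w})"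

definition bounded :: "('a set \<Rightarrow> nat) \<Rightarrow> ('a set \<Rightarrow> nat) \<Rightarrow> bool" where
  "bounded a x \<longleftrightarrow> (\<forall>v\<in>V. \<forall>u\<in>N v. a {v, u} \<in> {1..6} \<and> x {v, u} \<le> 2)"

definition untouched :: "nat \<Rightarrow> ('a set \<Rightarrow> nat) \<Rightarrow> bool" where
  "untouched k x \<longleftrightarrow> (\<forall>v\<in>V. \<forall>u\<in>N v. ord v < ord u \<and> k \<le> ord u \<longrightarrow> x {v, u} = 1)"

definition group_distinct :: "nat \<Rightarrow> ('a set \<Rightarrow> nat) \<Rightarrow> bool" where
  "group_distinct k a \<longleftrightarrow>
     (\<forall>w\<in>V. \<forall>u\<in>N w. \<forall>u'\<in>partners w u. settled k {w, u} \<and> settled k {w, u'} \<longrightarrow> a {w, u} \<noteq> a {w, u'})"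

definition sums_in_windows :: "nat \<Rightarrow> ('a set \<Rightarrow> nat) \<Rightarrow> ('a \<Rightarrow> int) \<Rightarrow> bool" where
  "sums_in_windows k c lo \<longleftrightarrow> (\<forall>v\<in>V. ord v < k \<and> \<not> is_root v \<longrightarrow> sigma_int c v \<in> window (lo v))"

definition windows_apart :: "nat \<Rightarrow> ('a \<Rightarrow> int) \<Rightarrow> bool" where
  "windows_apart k lo \<longleftrightarrow> (\<forall>v\<in>V. \<forall>u\<in>N v. ord v < k \<and> ord u < k \<and> \<not> is_root v \<and> \<not> is_root u
     \<longrightarrow> window (lo v) \<inter> window (lo u) = {})"

definition roots_distinguished :: "nat \<Rightarrow> ('a set \<Rightarrow> nat) \<Rightarrow> bool" where
  "roots_distinguished k c \<longleftrightarrow> (\<forall>r\<in>V. \<forall>j\<in>N r. ord r < k \<and> is_root r \<longrightarrow> sigma_int c r \<noteq> sigma_int c j)"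

text \<open>The state after processing the vertices of order below k. Later steps only move the sum at a
  processed non-root vertex v inside window (lo v), so adjacent such vertices stay distinguished.\<close>

definition invariant :: "nat \<Rightarrow> ('a set \<Rightarrow> nat) \<Rightarrow> ('a set \<Rightarrow> nat) \<Rightarrow> ('a \<Rightarrow> int) \<Rightarrow> bool" where
  "invariant k a x lo \<longleftrightarrow> bounded a x \<and> untouched k x \<and> group_distinct k a
     \<and> sums_in_windows k (colour a x) lo \<and> windows_apart k lo \<and> roots_distinguished k (colour a x)"

lemma edge_coloring_colour:
  assumes "bounded a x"
  shows "edge_coloring V E 18 (colour a x)"
  unfolding edge_coloring_def
proof
  fix e
  assume "e \<in> edges V E"
  then obtain u w where "e = {u, w}" "u \<in> V" "E u w"
    unfolding edges_def by blast
  then have "a e \<in> {1..6}" "x e \<le> 2"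
    using assms mem_nbrs_iff unfolding bounded_def by auto
  then show "colour a x e \<in> {1..18}"
    unfolding colour_def by auto
qed

lemma settled_card: "settled (card V) e"
  unfolding settled_def parent_edge_def using ord_less_card by blast

lemma majority_colour:
  assumes "bounded a x" and "group_distinct (card V) a"
  shows "majority V E (colour a x)"
proof (rule majority_if_partners_distinct, intro ballI)
  fix v u u'
  assume "v \<in> V" "u \<in> N v" "u' \<in> partners v u"
  then have "a {v, u} \<noteq> a {v, u'}" "a {v, u} \<in> {1..6}" "a {v, u'} \<in> {1..6}"
    using assms settled_card unfolding group_distinct_def bounded_def partners_def by auto
  then show "colour a x {v, u} \<noteq> colour a x {v, u'}"
    by (rule colour_neq[rotated 2])
qed

lemma nsd_if_separated:
  assumes "sums_in_windows (card V) c lo" and "windows_apart (card V) lo"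
    and "roots_distinguished (card V) c"
  shows "nsd V E c"
  unfolding nsd_def
proof (intro ballI impI)
  fix u w
  assume "u \<in> V" "w \<in> V" "E u w"
  then have "w \<in> N u" "u \<in> N w" "ord u < card V" "ord w < card V"
    using mem_nbrs_iff nbr_sym ord_less_card by auto
  consider "is_root u" | "is_root w" | "\<not> is_root u" "\<not> is_root w"
    by blast
  then have "sigma_int c u \<noteq> sigma_int c w"
  proof cases
    case 1
    then show ?thesis
      using assms(3) \<open>u \<in> V\<close> \<open>w \<in> N u\<close> \<open>ord u < card V\<close> unfolding roots_distinguished_def by blast
  next
    case 2
    then show ?thesis
      using assms(3) \<open>w \<in> V\<close> \<open>u \<in> N w\<close> \<open>ord w < card V\<close> unfolding roots_distinguished_def by metis
  next
    case 3
    then have "sigma_int c u \<in> window (lo u)" "sigma_int c w \<in> window (lo w)"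
      "window (lo u) \<inter> window (lo w) = {}"
      using assms(1,2) \<open>u \<in> V\<close> \<open>w \<in> V\<close> \<open>w \<in> N u\<close> \<open>ord u < card V\<close> \<open>ord w < card V\<close>
      unfolding sums_in_windows_def windows_apart_def by auto
    then show ?thesis
      by auto
  qed
  then show "sigma V E c u \<noteq> sigma V E c w"
    unfolding int_sigma[symmetric] by simp
qed

lemma good_colouring_if_invariant:
  assumes "invariant (card V) a x lo"
  shows "edge_coloring V E 18 (colour a x) \<and> majority V E (colour a x) \<and> nsd V E (colour a x)"
  using assms edge_coloring_colour majority_colour nsd_if_separated unfolding invariant_def by blast

definition conflict :: "'a set \<Rightarrow> 'a set \<Rightarrow> bool" where
  "conflict e e' \<longleftrightarrow> (\<exists>w\<in>V. \<exists>u\<in>N w. \<exists>u'\<in>partners w u. e = {w, u} \<and> e' = {w, u'})"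

lemma conflict_sym: "conflict e e' \<Longrightarrow> conflict e' e"
proof -
  assume "conflict e e'"
  then obtain w u u' where "w \<in> V" "u \<in> N w" "u' \<in> partners w u" "e = {w, u}" "e' = {w, u'}"
    unfolding conflict_def by blast
  moreover from this have "u' \<in> N w" "u \<in> partners w u'"
    using partners_sym unfolding partners_def by auto
  ultimately show "conflict e' e"
    unfolding conflict_def by blast
qed

lemma not_conflict_self: "\<not> conflict e e"
proof
  assume "conflict e e"
  then obtain w u u' where "u \<in> N w" "u' \<in> partners w u" "{w, u} = {w, u'}"
    unfolding conflict_def by blast
  then show False
    using nbr_neq unfolding partners_def doubleton_eq_iff by auto
qed

lemma card_conflicts_le:
  assumes "e \<in> edges V E"
  shows "card {e'\<in>X. conflict e e'} \<le> 4"
proof -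
  obtain y z where "e = {y, z}" "y \<in> V" "E y z"
    using assms unfolding edges_def by blast
  have "{e'\<in>X. conflict e e'} \<subseteq> (\<lambda>u. {y, u}) ` partners y z \<union> (\<lambda>u. {z, u}) ` partners z y"
  proof
    fix e'
    assume "e' \<in> {e'\<in>X. conflict e e'}"
    then obtain w u u' where "u' \<in> partners w u" "{y, z} = {w, u}" "e' = {w, u'}"
      unfolding conflict_def \<open>e = {y, z}\<close> by blast
    then show "e' \<in> (\<lambda>u. {y, u}) ` partners y z \<union> (\<lambda>u. {z, u}) ` partners z y"
      unfolding doubleton_eq_iff by auto
  qed
  then have "card {e'\<in>X. conflict e e'} \<le> card ((\<lambda>u. {y, u}) ` partners y z \<union> (\<lambda>u. {z, u}) ` partners z y)"
    using finite_partners by (intro card_mono) auto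
  also have "\<dots> \<le> card ((\<lambda>u. {y, u}) ` partners y z) + card ((\<lambda>u. {z, u}) ` partners z y)"
    by (rule card_Un_le)
  also have "\<dots> \<le> card (partners y z) + card (partners z y)"
    by (intro add_mono card_image_le finite_partners)
  also have "\<dots> \<le> 4"
  proof -
    have "z \<in> N y"
      using \<open>E y z\<close> mem_nbrs_iff by simp
    then show ?thesis
      using card_partners_le[OF \<open>y \<in> V\<close>] card_partners_le[OF nbr_in_V nbr_sym] by fastforce
  qed
  finally show ?thesis .
qed

lemma invariant_init: "\<exists>a x lo. invariant 0 a x lo"
proof -
  define X where "X = {e\<in>edges V E. \<not> parent_edge e}"
  have "edges V E \<subseteq> Pow V"
    unfolding edges_def by auto
  then have "finite (edges V E)"
    using finite_V by (meson finite_Pow_iff finite_subset)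
  then have "finite X"
    unfolding X_def by simp
  moreover have sparse: "card {e'\<in>X. conflict e e'} < 6" if "e \<in> X" for e
    using card_conflicts_le[of e X] that unfolding X_def by simp
  ultimately obtain f :: "'a set \<Rightarrow> nat"
    where f: "\<forall>e\<in>X. f e \<in> {1..6} \<and> (\<forall>e'\<in>X. conflict e e' \<longrightarrow> f e \<noteq> f e')"
    using greedy_colouring[OF _ sparse conflict_sym not_conflict_self] by blast
  define a where "a e = (if parent_edge e then 1 else f e)" for e
  have edge: "{w, u} \<in> edges V E" if "w \<in> V" "u \<in> N w" for w u
  proof -
    have "u \<in> V" "E w u"
      using that nbr_in_V mem_nbrs_iff by auto
    then show ?thesis
      using \<open>w \<in> V\<close> unfolding edges_def by blast
  qed
  have "bounded a (\<lambda>_. 1)"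
    using f edge unfolding bounded_def a_def X_def by auto
  moreover have "group_distinct 0 a"
    unfolding group_distinct_def
  proof (intro ballI impI)
    fix w u u'
    assume "w \<in> V" "u \<in> N w" "u' \<in> partners w u" "settled 0 {w, u} \<and> settled 0 {w, u'}"
    moreover from this have "{w, u} \<in> X" "{w, u'} \<in> X" "conflict {w, u} {w, u'}"
      using edge unfolding X_def settled_def conflict_def partners_def by auto
    ultimately show "a {w, u} \<noteq> a {w, u'}"
      using f unfolding a_def X_def by auto
  qed
  ultimately have "invariant 0 a (\<lambda>_. 1) (\<lambda>_. 0)"
    unfolding invariant_def untouched_def sums_in_windows_def windows_apart_def roots_distinguished_def
    by simp
  then show ?thesis
    by blast
qed

section \<open>Processing one vertex\<close>

lemma sigma_int_cong: "(\<And>u. u \<in> N w \<Longrightarrow> c' {w, u} = c {w, u}) \<Longrightarrow> sigma_int c' w = sigma_int c w"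
  unfolding sigma_int_def by simp

lemma sigma_int_change:
  assumes "u0 \<in> N w" and "\<And>u. u \<in> N w \<Longrightarrow> u \<noteq> u0 \<Longrightarrow> c' {w, u} = c {w, u}"
  shows "sigma_int c' w = sigma_int c w + (int (c' {w, u0}) - int (c {w, u0}))"
proof -
  have "(\<Sum>u\<in>N w - {u0}. int (c' {w, u})) = (\<Sum>u\<in>N w - {u0}. int (c {w, u}))"
    using assms(2) by simp
  then show ?thesis
    unfolding sigma_int_def using assms(1) finite_nbrs by (simp add: sum.remove)
qed

definition earlier_nbrs :: "'a \<Rightarrow> 'a set" where
  "earlier_nbrs v = {j\<in>N v. ord j < ord v}"

text \<open>Moving x {v, j} from 1 to 1 + flip_sign c lo j keeps the sum at j inside window (lo j).\<close>

definition flip_sign :: "('a set \<Rightarrow> nat) \<Rightarrow> ('a \<Rightarrow> int) \<Rightarrow> 'a \<Rightarrow> int" where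
  "flip_sign c lo j = (if sigma_int c j = lo j then 1 else -1)"

lemma flip_sign_cases: "flip_sign c lo j = 1 \<or> flip_sign c lo j = -1"
  unfolding flip_sign_def by simp

definition retune :: "('a set \<Rightarrow> nat) \<Rightarrow> 'a \<Rightarrow> 'a set \<Rightarrow> ('a \<Rightarrow> int) \<Rightarrow> 'a set \<Rightarrow> nat" where
  "retune x v Y s e =
     (if \<exists>j\<in>Y. e = {v, j} \<and> s j = 1 then 2 else if \<exists>j\<in>Y. e = {v, j} then 0 else x e)"

lemma retune_off: "v \<notin> e \<Longrightarrow> retune x v Y s e = x e"
  unfolding retune_def by auto

lemma retune_empty: "retune x v {} s = x"
  unfolding retune_def by simp

lemma retune_le: "x e \<le> 2 \<Longrightarrow> retune x v Y s e \<le> 2"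
  unfolding retune_def by simp

lemma retune_at:
  assumes "u \<in> N v" and "Y \<subseteq> N v" and "x {v, u} = 1" and "\<forall>j\<in>Y. s j = 1 \<or> s j = -1"
  shows "int (retune x v Y s {v, u}) = 1 + (if u \<in> Y then s u else 0)"
proof -
  have "{v, u} = {v, j} \<longleftrightarrow> j = u" if "j \<in> Y" for j
    using that assms(1,2) nbr_neq unfolding doubleton_eq_iff by blast
  then show ?thesis
    using assms(3,4) unfolding retune_def by auto
qed

lemma sigma_retune_far:
  assumes "w \<notin> N v" and "w \<noteq> v" and a': "\<And>e. v \<notin> e \<Longrightarrow> a' e = a e"
  shows "sigma_int (colour a' (retune x v Y s)) w = sigma_int (colour a x) w"
proof (rule sigma_int_cong)
  fix u
  assume "u \<in> N w"
  then have "v \<notin> {w, u}"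
    using assms(1,2) nbr_sym by auto
  then show "colour a' (retune x v Y s) {w, u} = colour a x {w, u}"
    using a' retune_off unfolding colour_def by simp
qed

lemma sigma_retune_nbr:
  assumes "j \<in> N v" and "Y \<subseteq> N v" and "x {v, j} = 1" and "\<forall>i\<in>Y. s i = 1 \<or> s i = -1"
    and a': "\<And>e. v \<notin> e \<Longrightarrow> a' e = a e" "a' {j, v} = a {j, v}"
  shows "sigma_int (colour a' (retune x v Y s)) j = sigma_int (colour a x) j + 6 * (if j \<in> Y then s j else 0)"
proof -
  have "sigma_int (colour a' (retune x v Y s)) j
      = sigma_int (colour a x) j + (int (colour a' (retune x v Y s) {j, v}) - int (colour a x {j, v}))"
  proof (rule sigma_int_change[OF nbr_sym[OF assms(1)]])
    fix u
    assume "u \<in> N j" "u \<noteq> v"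
    then have "v \<notin> {j, u}"
      using nbr_neq[OF assms(1)] by auto
    then show "colour a' (retune x v Y s) {j, u} = colour a x {j, u}"
      using a'(1) retune_off unfolding colour_def by simp
  qed
  moreover have "int (retune x v Y s {j, v}) = 1 + (if j \<in> Y then s j else 0)"
    using retune_at[of j v Y x s] assms(1-4) by (simp add: insert_commute)
  ultimately show ?thesis
    using assms(3) a'(2) unfolding colour_def by (simp add: insert_commute)
qed

lemma sigma_retune_self:
  assumes "Y \<subseteq> N v" and "\<forall>i\<in>Y. s i = 1 \<or> s i = -1" and "\<forall>u\<in>N v. x {v, u} = 1"
  shows "sigma_int (colour a' (retune x v Y s)) v
    = (\<Sum>u\<in>N v. int (a' {v, u})) + 6 * int (d v) + 6 * (\<Sum>j\<in>Y. s j)"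
proof -
  have "sigma_int (colour a' (retune x v Y s)) v
      = (\<Sum>u\<in>N v. int (a' {v, u}) + 6 * (1 + (if u \<in> Y then s u else 0)))"
    unfolding sigma_int_def colour_def using retune_at assms by (intro sum.cong) auto
  also have "\<dots> = (\<Sum>u\<in>N v. int (a' {v, u})) + 6 * int (d v) + 6 * (\<Sum>u\<in>N v. if u \<in> Y then s u else 0)"
    by (simp add: sum.distrib sum_distrib_left deg_eq_card)
  also have "(\<Sum>u\<in>N v. if u \<in> Y then s u else 0) = (\<Sum>j\<in>Y. s j)"
    using sum.inter_restrict[OF finite_nbrs, of s v Y] assms(1) by (simp add: Int_absorb1)
  finally show ?thesis .
qed

lemma bounded_retune:
  assumes "bounded a x" and "\<forall>w\<in>V. \<forall>u\<in>N w. a' {w, u} \<in> {1..6}"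
  shows "bounded a' (retune x v Y s)"
  using assms retune_le unfolding bounded_def by blast

lemma settled_Suc:
  assumes "v \<in> V"
  shows "settled (Suc (ord v)) e \<longleftrightarrow> settled (ord v) e \<or> (\<not> is_root v \<and> e = {v, parent v})"
proof -
  have "ord w < Suc (ord v) \<longleftrightarrow> ord w < ord v \<or> w = v" if "w \<in> V" for w
    using that assms ord_eq_iff by (auto simp: less_Suc_eq)
  then show ?thesis
    unfolding settled_def using assms by blast
qed

lemma group_distinct_Suc_root:
  assumes "group_distinct (ord v) a" and "v \<in> V" and "is_root v"
  shows "group_distinct (Suc (ord v)) a"
  using assms settled_Suc unfolding group_distinct_def by simp

definition forbidden :: "('a set \<Rightarrow> nat) \<Rightarrow> 'a \<Rightarrow> nat set" where
  "forbidden a v = (\<lambda>u. a {v, u}) ` partners v (parent v) \<union> (\<lambda>u. a {parent v, u}) ` partners (parent v) v"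

lemma finite_forbidden: "finite (forbidden a v)"
  unfolding forbidden_def using finite_partners by simp

lemma card_forbidden:
  assumes "v \<in> V" and "\<not> is_root v"
  shows "card (forbidden a v) \<le> 3 \<or> card (forbidden a v) \<le> 4 \<and> card (earlier_nbrs v) \<le> 2"
proof -
  define p where "p = parent v"
  have "p \<in> N v" "ord v < ord p"
    using parent[OF assms(2)] unfolding p_def by auto
  have "card (forbidden a v) \<le> card ((\<lambda>u. a {v, u}) ` partners v p) + card ((\<lambda>u. a {p, u}) ` partners p v)"
    unfolding forbidden_def p_def by (rule card_Un_le)
  also have "\<dots> \<le> card (partners v p) + card (partners p v)"
    by (intro add_mono card_image_le finite_partners)
  finally have F: "card (forbidden a v) \<le> card (partners v p) + card (partners p v)" .
  have "card (partners p v) \<le> 2" "card (partners v p) \<le> 2"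
    using card_partners_le nbr_in_V nbr_sym \<open>p \<in> N v\<close> assms(1) by auto
  show ?thesis
  proof (cases "d v = 3")
    case True
    have "earlier_nbrs v \<subseteq> N v - {p}"
      using \<open>ord v < ord p\<close> unfolding earlier_nbrs_def by auto
    then have "card (earlier_nbrs v) \<le> card (N v - {p})"
      using finite_nbrs by (intro card_mono) auto
    also have "\<dots> = 2"
      using True \<open>p \<in> N v\<close> finite_nbrs by (simp add: deg_eq_card)
    finally show ?thesis
      using F \<open>card (partners p v) \<le> 2\<close> \<open>card (partners v p) \<le> 2\<close> by linarith
  next
    case False
    then show ?thesis
      using F card_partners_parent_le[OF assms] \<open>card (partners p v) \<le> 2\<close> unfolding p_def by linarith
  qed
qed

lemma group_distinct_Suc_parent:
  assumes "group_distinct (ord v) a" and "v \<in> V" and "\<not> is_root v" and "\<alpha> \<notin> forbidden a v"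
  shows "group_distinct (Suc (ord v)) (a({v, parent v} := \<alpha>))"
  unfolding group_distinct_def
proof (intro ballI impI)
  fix w u u'
  assume "w \<in> V" "u \<in> N w" "u' \<in> partners w u"
    and settled: "settled (Suc (ord v)) {w, u} \<and> settled (Suc (ord v)) {w, u'}"
  define p where "p = parent v"
  have "u' \<in> N w" "u \<in> partners w u'"
    using \<open>u' \<in> partners w u\<close> \<open>u \<in> N w\<close> partners_sym unfolding partners_def by auto
  have "{w, u} \<noteq> {w, u'}"
    using \<open>u' \<in> partners w u\<close> \<open>u \<in> N w\<close> nbr_neq unfolding partners_def doubleton_eq_iff by auto
  have other_forbidden: "a {w, u2} \<in> forbidden a v" if "{w, u1} = {v, p}" "u2 \<in> partners w u1" for u1 u2
    using that unfolding forbidden_def p_def doubleton_eq_iff by auto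
  consider "{w, u} = {v, p}" | "{w, u'} = {v, p}" | "{w, u} \<noteq> {v, p}" "{w, u'} \<noteq> {v, p}"
    by blast
  then show "(a({v, parent v} := \<alpha>)) {w, u} \<noteq> (a({v, parent v} := \<alpha>)) {w, u'}"
  proof cases
    case 1
    then show ?thesis
      using other_forbidden[OF 1 \<open>u' \<in> partners w u\<close>] \<open>{w, u} \<noteq> {w, u'}\<close> assms(4) unfolding p_def by auto
  next
    case 2
    then show ?thesis
      using other_forbidden[OF 2 \<open>u \<in> partners w u'\<close>] \<open>{w, u} \<noteq> {w, u'}\<close> assms(4) unfolding p_def by auto
  next
    case 3
    then have "settled (ord v) {w, u}" "settled (ord v) {w, u'}"
      using settled settled_Suc[OF assms(2)] unfolding p_def by auto
    then show ?thesis
      using assms(1) 3 \<open>w \<in> V\<close> \<open>u \<in> N w\<close> \<open>u' \<in> partners w u\<close> unfolding group_distinct_def p_def by auto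
  qed
qed

context
  fixes k :: nat and a x :: "'a set \<Rightarrow> nat" and lo :: "'a \<Rightarrow> int" and v :: 'a
  assumes inv: "invariant k a x lo" and v: "v \<in> V" "ord v = k"
begin

lemma inv_bounded: "bounded a x"
  and inv_untouched: "untouched k x"
  and inv_group_distinct: "group_distinct k a"
  and inv_sums: "sums_in_windows k (colour a x) lo"
  and inv_windows: "windows_apart k lo"
  and inv_roots: "roots_distinguished k (colour a x)"
  using inv unfolding invariant_def by auto

lemma earlier_iff: "j \<in> earlier_nbrs v \<longleftrightarrow> j \<in> N v \<and> ord j < k"
  unfolding earlier_nbrs_def v(2) by simp

lemma ord_less_if_processed:
  assumes "w \<in> V" and "ord w < Suc k" and "w \<noteq> v"
  shows "ord w < k"
  using assms v ord_eq_iff by (auto simp: less_Suc_eq)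

lemma x_at_v:
  assumes "u \<in> N v"
  shows "x {v, u} = 1"
proof (cases "ord v < ord u")
  case True
  then show ?thesis
    using inv_untouched v assms unfolding untouched_def by auto
next
  case False
  have "ord u \<noteq> ord v"
    using nbr_in_V[OF assms] nbr_neq[OF assms] v(1) ord_eq_iff by simp
  then have "x {u, v} = 1"
    using False inv_untouched v nbr_sym[OF assms] nbr_in_V[OF assms] unfolding untouched_def by auto
  then show ?thesis
    by (simp add: insert_commute)
qed

lemma untouched_step:
  assumes "Y \<subseteq> earlier_nbrs v"
  shows "untouched (Suc k) (retune x v Y s)"
  unfolding untouched_def
proof (intro ballI impI)
  fix w u
  assume "w \<in> V" "u \<in> N w" and ord: "ord w < ord u \<and> Suc k \<le> ord u"
  then have "u \<noteq> v" "u \<notin> earlier_nbrs v"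
    using v(2) unfolding earlier_iff by auto
  then have "u \<notin> Y"
    using assms by blast
  show "retune x v Y s {w, u} = 1"
  proof (cases "w = v")
    case True
    have "\<not> (\<exists>j\<in>Y. {v, u} = {v, j})"
      using \<open>u \<noteq> v\<close> \<open>u \<notin> Y\<close> unfolding doubleton_eq_iff by auto
    then show ?thesis
      using x_at_v \<open>u \<in> N w\<close> True unfolding retune_def by auto
  next
    case False
    then have "v \<notin> {w, u}"
      using \<open>u \<noteq> v\<close> by simp
    then show ?thesis
      using retune_off inv_untouched \<open>w \<in> V\<close> \<open>u \<in> N w\<close> ord unfolding untouched_def by simp
  qed
qed

lemma sums_in_windows_step:
  assumes "Y \<subseteq> earlier_nbrs v"
    and a': "\<And>e. v \<notin> e \<Longrightarrow> a' e = a e" "\<And>j. j \<in> earlier_nbrs v \<Longrightarrow> a' {j, v} = a {j, v}"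
    and lo': "\<And>w. w \<noteq> v \<Longrightarrow> lo' w = lo w"
    and at_v: "\<not> is_root v \<Longrightarrow> sigma_int (colour a' (retune x v Y (flip_sign (colour a x) lo))) v \<in> window (lo' v)"
  shows "sums_in_windows (Suc k) (colour a' (retune x v Y (flip_sign (colour a x) lo))) lo'"
  unfolding sums_in_windows_def
proof (intro ballI impI)
  fix w
  assume "w \<in> V" and w: "ord w < Suc k \<and> \<not> is_root w"
  define s where "s = flip_sign (colour a x) lo"
  show "sigma_int (colour a' (retune x v Y s)) w \<in> window (lo' w)"
  proof (cases "w = v")
    case True
    then show ?thesis
      using at_v w unfolding s_def by simp
  next
    case False
    then have "ord w < k" "lo' w = lo w"
      using ord_less_if_processed \<open>w \<in> V\<close> w lo' by auto
    then have old: "sigma_int (colour a x) w \<in> window (lo w)"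
      using inv_sums \<open>w \<in> V\<close> w unfolding sums_in_windows_def by simp
    show ?thesis
    proof (cases "w \<in> N v")
      case True
      then have "w \<in> earlier_nbrs v"
        using \<open>ord w < k\<close> earlier_iff by simp
      moreover have "Y \<subseteq> N v" "\<forall>i\<in>Y. s i = 1 \<or> s i = -1"
        using assms(1) flip_sign_cases unfolding earlier_nbrs_def s_def by auto
      ultimately have "sigma_int (colour a' (retune x v Y s)) w
          = sigma_int (colour a x) w + 6 * (if w \<in> Y then s w else 0)"
        using sigma_retune_nbr[of w v Y x s a' a] True x_at_v[OF True] a' by blast
      then show ?thesis
        using old window_flip[OF old] \<open>lo' w = lo w\<close> unfolding s_def flip_sign_def by auto
    next
      case False
      then show ?thesis
        using sigma_retune_far[OF False \<open>w \<noteq> v\<close> a'(1)] old \<open>lo' w = lo w\<close> by simp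
    qed
  qed
qed

lemma windows_apart_step:
  assumes lo': "\<And>w. w \<noteq> v \<Longrightarrow> lo' w = lo w"
    and at_v: "\<not> is_root v \<Longrightarrow> \<forall>j\<in>earlier_nbrs v. window (lo' v) \<inter> window (lo j) = {}"
  shows "windows_apart (Suc k) lo'"
  unfolding windows_apart_def
proof (intro ballI impI)
  fix w u
  assume "w \<in> V" "u \<in> N w"
    and h: "ord w < Suc k \<and> ord u < Suc k \<and> \<not> is_root w \<and> \<not> is_root u"
  have earlier: "y \<in> earlier_nbrs v" if "y \<in> N v" "ord y < Suc k" for y
    using that ord_less_if_processed[OF nbr_in_V] nbr_neq earlier_iff by blast
  consider "w = v" | "u = v" | "w \<noteq> v" "u \<noteq> v"
    by blast
  then show "window (lo' w) \<inter> window (lo' u) = {}"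
  proof cases
    case 1
    then show ?thesis
      using at_v earlier[of u] \<open>u \<in> N w\<close> h lo' nbr_neq by auto
  next
    case 2
    then have "w \<in> earlier_nbrs v" "w \<noteq> v"
      using earlier[of w] nbr_sym[OF \<open>u \<in> N w\<close>] h nbr_neq[OF \<open>u \<in> N w\<close>] by auto
    then show ?thesis
      using at_v h 2 lo' by (auto simp: Int_commute)
  next
    case 3
    then have "ord w < k" "ord u < k"
      using ord_less_if_processed \<open>w \<in> V\<close> nbr_in_V[OF \<open>u \<in> N w\<close>] h by auto
    then show ?thesis
      using inv_windows \<open>w \<in> V\<close> \<open>u \<in> N w\<close> h 3 lo' unfolding windows_apart_def by auto
  qed
qed

lemma roots_distinguished_step:
  assumes a': "\<And>e. v \<notin> e \<Longrightarrow> a' e = a e"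
    and at_v: "is_root v \<Longrightarrow> \<forall>j\<in>N v. sigma_int (colour a' (retune x v Y s)) v \<noteq> sigma_int (colour a' (retune x v Y s)) j"
  shows "roots_distinguished (Suc k) (colour a' (retune x v Y s))"
  unfolding roots_distinguished_def
proof (intro ballI impI)
  fix r j
  assume "r \<in> V" "j \<in> N r" and r: "ord r < Suc k \<and> is_root r"
  show "sigma_int (colour a' (retune x v Y s)) r \<noteq> sigma_int (colour a' (retune x v Y s)) j"
  proof (cases "r = v")
    case True
    then show ?thesis
      using at_v r \<open>j \<in> N r\<close> by simp
  next
    case False
    then have "ord r < k"
      using ord_less_if_processed \<open>r \<in> V\<close> r by simp
    have "v \<notin> N r" "j \<noteq> v" "v \<notin> N j" \<comment> \<open>the ball of radius two around r precedes r\<close>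
      using root_nbr_less[of r v] root_nbr_less[OF _ \<open>j \<in> N r\<close>] root_dist2_le[OF _ \<open>j \<in> N r\<close>, of v]
        r \<open>ord r < k\<close> v(2) by auto
    then have "r \<notin> N v" "j \<notin> N v"
      using nbr_sym by auto
    then show ?thesis
      using sigma_retune_far[OF _ _ a'] False \<open>j \<noteq> v\<close> inv_roots \<open>r \<in> V\<close> \<open>j \<in> N r\<close> r \<open>ord r < k\<close>
      unfolding roots_distinguished_def by simp
  qed
qed

lemma invariant_Suc:
  assumes x': "x' = retune x v Y (flip_sign (colour a x) lo)"
    and "Y \<subseteq> earlier_nbrs v"
    and "\<forall>w\<in>V. \<forall>u\<in>N w. a' {w, u} \<in> {1..6}"
    and a': "\<And>e. v \<notin> e \<Longrightarrow> a' e = a e" "\<And>j. j \<in> earlier_nbrs v \<Longrightarrow> a' {j, v} = a {j, v}"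
    and "group_distinct (Suc k) a'"
    and lo': "\<And>w. w \<noteq> v \<Longrightarrow> lo' w = lo w"
    and window_at_v: "\<not> is_root v \<Longrightarrow> sigma_int (colour a' x') v \<in> window (lo' v)"
    and window_apart_at_v: "\<not> is_root v \<Longrightarrow> \<forall>j\<in>earlier_nbrs v. window (lo' v) \<inter> window (lo j) = {}"
    and at_root: "is_root v \<Longrightarrow> \<forall>j\<in>N v. sigma_int (colour a' x') v \<noteq> sigma_int (colour a' x') j"
  shows "invariant (Suc k) a' x' lo'"
  unfolding invariant_def x'
proof (intro conjI)
  show "bounded a' (retune x v Y (flip_sign (colour a x) lo))"
    using inv_bounded assms(3) by (rule bounded_retune)
  show "untouched (Suc k) (retune x v Y (flip_sign (colour a x) lo))"
    using assms(2) by (rule untouched_step)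
  show "sums_in_windows (Suc k) (colour a' (retune x v Y (flip_sign (colour a x) lo))) lo'"
    by (rule sums_in_windows_step[OF assms(2) a' lo' window_at_v[unfolded x']])
  show "windows_apart (Suc k) lo'"
    by (rule windows_apart_step[OF lo' window_apart_at_v])
  show "roots_distinguished (Suc k) (colour a' (retune x v Y (flip_sign (colour a x) lo)))"
    using a'(1) at_root[unfolded x'] by (rule roots_distinguished_step)
qed fact

lemma retune_separates_root:
  assumes "Y \<subseteq> N v" and signs: "\<forall>i\<in>Y. s i = 1 \<or> s i = -1"
    and Y: "\<forall>j\<in>N v. (\<Sum>i\<in>Y - {j}. s i) \<noteq> (sigma_int (colour a x) j - sigma_int (colour a x) v) div 6"
  shows "\<forall>j\<in>N v. sigma_int (colour a (retune x v Y s)) v \<noteq> sigma_int (colour a (retune x v Y s)) j"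
proof (intro ballI notI)
  fix j
  assume "j \<in> N v" and eq: "sigma_int (colour a (retune x v Y s)) v = sigma_int (colour a (retune x v Y s)) j"
  define \<sigma> where "\<sigma> = sigma_int (colour a x)"
  have "sigma_int (colour a (retune x v Y s)) v = \<sigma> v + 6 * (\<Sum>i\<in>Y. s i)"
    using sigma_retune_self[OF assms(1,2), of x a] sigma_retune_self[of "{}" v s x a]
      x_at_v retune_empty unfolding \<sigma>_def by simp
  moreover have "sigma_int (colour a (retune x v Y s)) j = \<sigma> j + 6 * (if j \<in> Y then s j else 0)"
    using sigma_retune_nbr[of j v Y x s a a] \<open>j \<in> N v\<close> assms(1,2) x_at_v[OF \<open>j \<in> N v\<close>]
    unfolding \<sigma>_def by blast
  moreover have "(\<Sum>i\<in>Y. s i) = (\<Sum>i\<in>Y - {j}. s i) + (if j \<in> Y then s j else 0)"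
    using finite_subset[OF \<open>Y \<subseteq> N v\<close> finite_nbrs] by (simp add: sum.remove)
  ultimately have "\<sigma> j - \<sigma> v = 6 * (\<Sum>i\<in>Y - {j}. s i)"
    using eq by simp
  then have "(\<sigma> j - \<sigma> v) div 6 = (\<Sum>i\<in>Y - {j}. s i)"
    by simp
  then show False
    using bspec[OF Y \<open>j \<in> N v\<close>] unfolding \<sigma>_def by simp
qed

lemma invariant_Suc_at_root:
  assumes "is_root v"
  shows "\<exists>a' x' lo'. invariant (Suc k) a' x' lo'"
proof -
  define s where "s = flip_sign (colour a x) lo"
  define \<sigma> where "\<sigma> = sigma_int (colour a x)"
  have "earlier_nbrs v = N v"
    using root_nbr_less[OF assms] v(2) unfolding earlier_nbrs_def by auto
  have signs: "\<forall>j\<in>N v. s j = 1 \<or> s j = -1"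
    using flip_sign_cases unfolding s_def by blast
  have "2 \<le> card (N v)"
    using two_le_deg[OF v(1)] unfolding deg_eq_card .
  then obtain Y where "Y \<subseteq> N v" and Y: "\<forall>j\<in>N v. (\<Sum>i\<in>Y - {j}. s i) \<noteq> (\<sigma> j - \<sigma> v) div 6"
    using ex_subset_signed_sum_remove_avoids[OF finite_nbrs _ signs, where w = "\<lambda>j. (\<sigma> j - \<sigma> v) div 6"]
    by blast
  then have "\<forall>j\<in>N v. sigma_int (colour a (retune x v Y s)) v \<noteq> sigma_int (colour a (retune x v Y s)) j"
    using retune_separates_root signs unfolding \<sigma>_def by blast
  then have "invariant (Suc k) a (retune x v Y s) lo"
    by (intro invariant_Suc) (use inv_bounded inv_group_distinct group_distinct_Suc_root v assms
        \<open>Y \<subseteq> N v\<close> \<open>earlier_nbrs v = N v\<close> in \<open>auto simp: bounded_def s_def\<close>)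
  then show ?thesis
    by blast
qed

lemma sigma_retune_parent_update:
  assumes "\<not> is_root v" and "Y \<subseteq> earlier_nbrs v" and "\<forall>i\<in>Y. s i = 1 \<or> s i = -1"
  shows "sigma_int (colour (a({v, parent v} := \<alpha>)) (retune x v Y s)) v
    = (\<Sum>u\<in>N v - {parent v}. int (a {v, u})) + 6 * int (d v) + int \<alpha> + 6 * (\<Sum>i\<in>Y. s i)"
proof -
  define p where "p = parent v"
  have "p \<in> N v"
    using parent(1)[OF assms(1)] unfolding p_def .
  have "(\<Sum>u\<in>N v - {p}. int ((a({v, p} := \<alpha>)) {v, u})) = (\<Sum>u\<in>N v - {p}. int (a {v, u}))"
    by (intro sum.cong) (auto simp: doubleton_eq_iff)
  then have "(\<Sum>u\<in>N v. int ((a({v, p} := \<alpha>)) {v, u})) = int \<alpha> + (\<Sum>u\<in>N v - {p}. int (a {v, u}))"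
    using \<open>p \<in> N v\<close> finite_nbrs by (simp add: sum.remove)
  moreover have "Y \<subseteq> N v"
    using assms(2) unfolding earlier_nbrs_def by auto
  ultimately show ?thesis
    using sigma_retune_self[of Y v s x "a({v, p} := \<alpha>)"] assms(3) x_at_v unfolding p_def by simp
qed

lemma invariant_Suc_at_nonroot:
  assumes "\<not> is_root v"
  shows "\<exists>a' x' lo'. invariant (Suc k) a' x' lo'"
proof -
  define s where "s = flip_sign (colour a x) lo"
  define B where "B = earlier_nbrs v"
  define \<beta> where "\<beta> = (\<Sum>u\<in>N v - {parent v}. int (a {v, u})) + 6 * int (d v)"
  have "finite B"
    unfolding B_def earlier_nbrs_def using finite_nbrs by simp
  have signs: "\<forall>j\<in>B. s j = 1 \<or> s j = -1"
    using flip_sign_cases unfolding s_def by blast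
  obtain \<alpha> Y L where "\<alpha> \<in> {1..6}" "\<alpha> \<notin> forbidden a v" "Y \<subseteq> B"
    and L: "\<beta> + int \<alpha> + 6 * (\<Sum>i\<in>Y. s i) \<in> window L"
    and apart: "\<forall>j\<in>B. window L \<inter> window (lo j) = {}"
    using ex_colour_and_window[OF \<open>finite B\<close> signs finite_forbidden, where s = \<beta> and lo = lo]
      card_forbidden[OF v(1) assms] unfolding B_def by blast
  define a' where "a' = a({v, parent v} := \<alpha>)"
  have "\<forall>i\<in>Y. s i = 1 \<or> s i = -1"
    using signs \<open>Y \<subseteq> B\<close> by blast
  then have "sigma_int (colour a' (retune x v Y s)) v \<in> window L"
    using sigma_retune_parent_update[OF assms, of Y s \<alpha>] \<open>Y \<subseteq> B\<close> L
    unfolding a'_def B_def \<beta>_def by (simp add: algebra_simps)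
  moreover have "a' {j, v} = a {j, v}" if "j \<in> B" for j
    using that parent(2)[OF assms] nbr_neq v(2) unfolding a'_def B_def earlier_nbrs_def
    by (auto simp: doubleton_eq_iff)
  moreover have "group_distinct (Suc k) a'"
    using group_distinct_Suc_parent[OF _ v(1) assms \<open>\<alpha> \<notin> forbidden a v\<close>] inv_group_distinct v(2)
    unfolding a'_def by simp
  ultimately have "invariant (Suc k) a' (retune x v Y s) (lo(v := L))"
    by (intro invariant_Suc)
      (use inv_bounded \<open>\<alpha> \<in> {1..6}\<close> \<open>Y \<subseteq> B\<close> apart assms in \<open>auto simp: a'_def B_def s_def bounded_def\<close>)
  then show ?thesis
    by blast
qed

end

lemma ex_invariant: "k \<le> card V \<Longrightarrow> \<exists>a x lo. invariant k a x lo"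
proof (induction k)
  case 0
  show ?case
    by (rule invariant_init)
next
  case (Suc k)
  then obtain a x lo where "invariant k a x lo"
    by auto
  moreover have "k \<in> ord ` V"
    using Suc.prems bij_betw_imp_surj_on[OF ord_bij] by simp
  then obtain v where "v \<in> V" "ord v = k"
    by blast
  ultimately show ?case
    using invariant_Suc_at_root invariant_Suc_at_nonroot by blast
qed

lemma ex_good_colouring: "\<exists>c. edge_coloring V E 18 c \<and> majority V E c \<and> nsd V E c"
  using ex_invariant[OF order_refl] good_colouring_if_invariant by blast

end

theorem mainTheorem10:
  fixes V :: "'a set" and E :: "'a \<Rightarrow> 'a \<Rightarrow> bool"
  assumes "simple_graph V E"
    and "min_degree_ge V E 2"
  shows "(\<exists>c. edge_coloring V E 18 c \<and> majority V E c \<and> nsd V E c) \<and> chi_mSigma V E \<le> 18"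
proof -
  obtain ord where "ordered_graph V E ord"
    using ex_order_later_nbr_or_last[of V E] assms unfolding ordered_graph_def simple_graph_def by blast
  then obtain c where c: "edge_coloring V E 18 c \<and> majority V E c \<and> nsd V E c"
    using ordered_graph.ex_good_colouring by blast
  have "chi_mSigma V E \<le> 18"
    unfolding chi_mSigma_def by (rule Least_le) (use c in blast)
  with c show ?thesis
    by blast
qed

end
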